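(* Fix a dimension $d\ge 1$ and call permutations achievable with respect to $d$-dimensional boxes. (1) If $p_1\in S_n$ and $p_2\in S_k$ are achievable, then the permutation in $S_{n+k}$ whose one-line notation is $p_1(1)\cdots p_1(n)\,(p_2(1)+n)\cdots(p_2(k)+n)$ is achievable. (2) If $p\in S_n$ is achievable and $x\in\{1,\dots,n\}$, then the permutation in $S_{n+1}$ obtained from the one-line notation of $p$ by replacing the entry $x$ with the two consecutive entries $x,\,x+1$ and increasing every other entry greater than $x$ by $1$ is achievable. (3) If $p$ is achievable, then so is its inverse $p^{-1}$.
   Context: A $d$-dimensional box $A$ has closed side lengths $a_1\le\dots\le a_d$ (positive reals). A state of $A$ is either closed or expanded along one side $i$: $a_i$ is replaced by $a_i'$ with $a_i\le a_i'\le 2a_i$, other sides unchanged (only one side can expand). The dimension vector of a state is its side lengths sorted non-decreasingly. A box in some state fits inside another box in some state if each coordinate of the outer one's dimension vector is strictly larger than the corresponding coordinate of the inner one's. An order $X_1,\dots,X_m$ (innermost to outermost) of boxes is a possible arrangement if each box can be given a state so that $X_j$ fits inside $X_{j+1}$ for all $j$; states may differ between arrangements. A permutation $p\in S_m$, written in one-line notation $p(1)p(2)\cdots p(m)$, is achievable if there exist $d$-dimensional boxes $B_1,\dots,B_m$ such that both the natural order $B_1,B_2,\dots,B_m$ and the order $B_{p(1)},B_{p(2)},\dots,B_{p(m)}$ (innermost to outermost) are possible arrangements. *)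

theory Defs
  imports Complex_Main "HOL-Combinatorics.Permutations"
begin

text \<open>A d-dimensional box is given by its closed side lengths, a list of
  d positive reals in non-decreasing order.\<close>
definition is_box :: "nat \<Rightarrow> real list \<Rightarrow> bool" where
  "is_box d a \<longleftrightarrow> length a = d \<and> (\<forall>x\<in>set a. 0 < x) \<and> sorted a"

definition box_states :: "real list \<Rightarrow> real list set" where
  "box_states a = {a} \<union>
     {a[i := t] | i t. i < length a \<and> a ! i \<le> t \<and> t \<le> 2 * a ! i}"

definition dim_vec :: "real list \<Rightarrow> real list" where
  "dim_vec s = sort s"

definition fits_in :: "real list \<Rightarrow> real list \<Rightarrow> bool" where
  "fits_in s t \<longleftrightarrow> length s = length t \<and>
     (\<forall>j < length s. dim_vec s ! j < dim_vec t ! j)"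

text \<open>An order X_1,...,X_m (innermost to outermost) is a possible arrangement.\<close>
definition possible_arrangement :: "real list list \<Rightarrow> bool" where
  "possible_arrangement X \<longleftrightarrow>
     (\<exists>S. length S = length X \<and> (\<forall>j < length X. S ! j \<in> box_states (X ! j)) \<and>
          (\<forall>j. Suc j < length X \<longrightarrow> fits_in (S ! j) (S ! Suc j)))"

definition achievable :: "nat \<Rightarrow> nat \<Rightarrow> (nat \<Rightarrow> nat) \<Rightarrow> bool" where
  "achievable d m p \<longleftrightarrow>
     (\<exists>B :: nat \<Rightarrow> real list. (\<forall>i\<in>{1..m}. is_box d (B i)) \<and>
        possible_arrangement (map B [1..<m+1]) \<and>
        possible_arrangement (map (\<lambda>i. B (p i)) [1..<m+1]))"

definition perm_sum :: "nat \<Rightarrow> (nat \<Rightarrow> nat) \<Rightarrow> nat \<Rightarrow> (nat \<Rightarrow> nat) \<Rightarrow> nat \<Rightarrow> nat" where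
  "perm_sum n p1 k p2 i =
     (if i \<in> {1..n} then p1 i else if i \<in> {n+1..n+k} then p2 (i - n) + n else i)"

definition perm_dup :: "nat \<Rightarrow> (nat \<Rightarrow> nat) \<Rightarrow> nat \<Rightarrow> nat \<Rightarrow> nat" where
  "perm_dup n p x i =
     (let j = inv p x; sh = (\<lambda>v. if x < v then v + 1 else v) in
      if i \<in> {1..j} then sh (p i)
      else if i = j + 1 then x + 1
      else if i \<in> {j+2..n+1} then sh (p (i - 1))
      else i)"

end

theory Submission
  imports Defs "HOL-Library.Multiset"
begin

text \<open>Achievability of p is witnessed by one family of boxes carrying two arrangements,
  and each part modifies such a family.  For the inverse, relabel the boxes along p,
  which swaps the two arrangements.  For the direct sum, blow up the second family by a
  factor so large that every state of a box of the first family fits into every state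
  of a box of the second, and concatenate the arrangements.  For the duplication of x,
  insert in both arrangements, directly after box x, a copy of it scaled by some b > 1:
  a state s of x fits into b s, and since fitting is a strict inequality, b s still
  fits into whatever s fitted into, provided b is close enough to 1.\<close>

definition scale :: "real \<Rightarrow> real list \<Rightarrow> real list" where
  "scale c a = map (\<lambda>y. c * y) a"

lemma length_scale [simp]: "length (scale c s) = length s"
  by (simp add: scale_def)

lemma sort_scale: "0 < c \<Longrightarrow> sort (scale c s) = scale c (sort s)"
  unfolding scale_def
  by (rule properties_for_sort) (auto simp: sorted_map intro: sorted_wrt_mono_rel[OF _ sorted_sort])

lemma nth_sort_scale: "0 < c \<Longrightarrow> j < length s \<Longrightarrow> sort (scale c s) ! j = c * sort s ! j"
  by (simp add: sort_scale) (simp add: scale_def)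

lemma is_box_scale: "0 < c \<Longrightarrow> is_box d a \<Longrightarrow> is_box d (scale c a)"
  unfolding is_box_def scale_def by (auto simp: sorted_map intro: sorted_wrt_mono_rel)

lemma length_box_state: "s \<in> box_states a \<Longrightarrow> length s = length a"
  unfolding box_states_def by auto

lemma box_state_side_bounds:
  assumes s: "s \<in> box_states a" and y: "y \<in> set s" and pos: "\<forall>z\<in>set a. 0 < z"
  obtains z where "z \<in> set a" "z \<le> y" "y \<le> 2 * z"
proof (cases "s = a")
  case True
  then show ?thesis using that y pos by force
next
  case False
  then obtain i t where it: "s = a[i := t]" "i < length a" "a ! i \<le> t" "t \<le> 2 * a ! i"
    using s unfolding box_states_def by auto
  then have "y = t \<or> y \<in> set a" using y set_update_subset_insert[of a i t] by blast
  then show ?thesis using that it pos by force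
qed

lemma box_state_pos:
  assumes "s \<in> box_states a" "\<forall>z\<in>set a. 0 < z"
  shows "\<forall>y\<in>set s. 0 < y"
proof
  fix y assume "y \<in> set s"
  then obtain z where "z \<in> set a" "z \<le> y" by (rule box_state_side_bounds[OF assms(1) _ assms(2)])
  then show "0 < y" using assms(2) by fastforce
qed

lemma scale_in_box_states:
  assumes c: "0 < c" and s: "s \<in> box_states a"
  shows "scale c s \<in> box_states (scale c a)"
proof (cases "s = a")
  case True
  then show ?thesis unfolding box_states_def by simp
next
  case False
  then obtain i t where it: "s = a[i := t]" "i < length a" "a ! i \<le> t" "t \<le> 2 * a ! i"
    using s unfolding box_states_def by auto
  then have "scale c s = (scale c a)[i := c * t]"
    unfolding scale_def by (simp add: map_update)
  moreover have "scale c a ! i \<le> c * t" "c * t \<le> 2 * (scale c a ! i)"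
    using it c unfolding scale_def by auto
  ultimately show ?thesis using it unfolding box_states_def scale_def by fastforce
qed

lemma fits_in_scale: "0 < c \<Longrightarrow> fits_in s t \<Longrightarrow> fits_in (scale c s) (scale c t)"
  unfolding fits_in_def dim_vec_def by (simp add: sort_scale) (simp add: scale_def)

lemma fits_in_scale_self:
  assumes pos: "\<forall>y\<in>set s. 0 < y" and b: "1 < b"
  shows "fits_in s (scale b s)"
  unfolding fits_in_def dim_vec_def
proof (intro conjI allI impI)
  show "length s = length (scale b s)" by simp
  fix j assume j: "j < length s"
  then have "0 < sort s ! j" using pos by (metis length_sort nth_mem set_sort)
  then show "sort s ! j < sort (scale b s) ! j" using b j by (simp add: nth_sort_scale)
qed

lemma eventually_scale_fits_in:
  assumes st: "fits_in s t"
  shows "\<forall>\<^sub>F b in at_right 1. fits_in (scale b s) t"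
proof -
  have "\<forall>\<^sub>F b in at_right 1. \<forall>j\<in>{..<length s}. b * sort s ! j < sort t ! j"
  proof (intro eventually_ball_finite ballI)
    fix j assume "j \<in> {..<length s}"
    then have "1 * sort s ! j < sort t ! j" using st unfolding fits_in_def dim_vec_def by simp
    moreover have "((\<lambda>b. b * sort s ! j) \<longlongrightarrow> 1 * sort s ! j) (at_right 1)"
      by (intro tendsto_intros)
    ultimately show "\<forall>\<^sub>F b in at_right 1. b * sort s ! j < sort t ! j"
      using order_tendstoD(2) by blast
  qed simp
  with eventually_at_right_less show ?thesis
  proof eventually_elim
    case (elim b)
    then show ?case using st unfolding fits_in_def dim_vec_def by (simp add: nth_sort_scale)
  qed
qed

lemma fits_in_if_sides_less:
  assumes "length s = length t" "\<forall>y\<in>set s. \<forall>z\<in>set t. y < z"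
  shows "fits_in s t"
  unfolding fits_in_def dim_vec_def using assms by (metis length_sort nth_mem set_sort)

lemma possible_arrangement_iff:
  "possible_arrangement X \<longleftrightarrow>
     (\<exists>S. list_all2 (\<lambda>s a. s \<in> box_states a) S X \<and> successively fits_in S)"
  unfolding possible_arrangement_def list_all2_conv_all_nth successively_conv_nth by auto

lemma possible_arrangement_scale:
  assumes c: "0 < c" and X: "possible_arrangement X"
  shows "possible_arrangement (map (scale c) X)"
proof -
  obtain S where S: "list_all2 (\<lambda>s a. s \<in> box_states a) S X" "successively fits_in S"
    using X possible_arrangement_iff by blast
  have "list_all2 (\<lambda>s a. s \<in> box_states a) (map (scale c) S) (map (scale c) X)"
    using S(1) by (auto simp: list_all2_map1 list_all2_map2 elim: list_all2_mono
        intro: scale_in_box_states[OF c])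
  moreover have "successively fits_in (map (scale c) S)"
    using S(2) by (auto simp: successively_map elim: successively_mono intro: fits_in_scale[OF c])
  ultimately show ?thesis using possible_arrangement_iff by blast
qed

lemma possible_arrangement_append:
  assumes X: "possible_arrangement X" and Y: "possible_arrangement Y"
    and fit: "\<forall>a\<in>set X. \<forall>b\<in>set Y. \<forall>s\<in>box_states a. \<forall>t\<in>box_states b. fits_in s t"
  shows "possible_arrangement (X @ Y)"
proof -
  obtain S where S: "list_all2 (\<lambda>s a. s \<in> box_states a) S X" "successively fits_in S"
    using X possible_arrangement_iff by blast
  obtain T where T: "list_all2 (\<lambda>s a. s \<in> box_states a) T Y" "successively fits_in T"
    using Y possible_arrangement_iff by blast
  have "fits_in (last S) (hd T)" if ne: "S \<noteq> []" "T \<noteq> []"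
  proof -
    obtain a where "a \<in> set X" "last S \<in> box_states a"
      using S(1) last_in_set[OF ne(1)] by (metis in_set_conv_nth list_all2_conv_all_nth nth_mem)
    moreover obtain b where "b \<in> set Y" "hd T \<in> box_states b"
      using T(1) hd_in_set[OF ne(2)] by (metis in_set_conv_nth list_all2_conv_all_nth nth_mem)
    ultimately show ?thesis using fit by blast
  qed
  then have "successively fits_in (S @ T)"
    using S(2) T(2) by (auto simp: successively_append_iff)
  moreover have "list_all2 (\<lambda>s a. s \<in> box_states a) (S @ T) (X @ Y)"
    using S(1) T(1) by (rule list_all2_appendI)
  ultimately show ?thesis using possible_arrangement_iff by blast
qed

lemma eventually_possible_arrangement_insert_scaled:
  assumes pos: "\<forall>y\<in>set a. 0 < y" and X: "possible_arrangement (xs @ a # ys)"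
  shows "\<forall>\<^sub>F b in at_right 1. possible_arrangement (xs @ a # scale b a # ys)"
proof -
  obtain S where S: "list_all2 (\<lambda>s a. s \<in> box_states a) S (xs @ a # ys)" "successively fits_in S"
    using X possible_arrangement_iff by blast
  then obtain us s ws where S_eq: "S = us @ s # ws"
    and us: "list_all2 (\<lambda>s a. s \<in> box_states a) us xs"
    and s: "s \<in> box_states a" and ws: "list_all2 (\<lambda>s a. s \<in> box_states a) ws ys"
    by (auto simp: list_all2_append2 list_all2_Cons2)
  have s_pos: "\<forall>y\<in>set s. 0 < y" using box_state_pos[OF s pos] .
  have s_ws: "successively fits_in (s # ws)"
    using S(2) unfolding S_eq by (simp add: successively_append_iff)
  have "\<forall>\<^sub>F b in at_right 1. successively fits_in (s # scale b s # ws)"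
  proof (cases ws)
    case Nil
    show ?thesis using eventually_at_right_less
      by eventually_elim (simp add: Nil fits_in_scale_self[OF s_pos])
  next
    case (Cons t ws')
    have "fits_in s t" "successively fits_in (t # ws')" using s_ws Cons by simp_all
    from eventually_scale_fits_in[OF this(1)] eventually_at_right_less show ?thesis
      by eventually_elim (simp add: Cons \<open>successively fits_in (t # ws')\<close> fits_in_scale_self[OF s_pos])
  qed
  with eventually_at_right_less show ?thesis
  proof eventually_elim
    case (elim b)
    let ?S = "us @ s # scale b s # ws"
    have "list_all2 (\<lambda>s a. s \<in> box_states a) ?S (xs @ a # scale b a # ys)"
      using us s ws scale_in_box_states[of b s a] elim by (auto intro: list_all2_appendI)
    moreover have "successively fits_in ?S"
      using S(2) elim unfolding S_eq by (auto simp: successively_append_iff)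
    ultimately show ?case using possible_arrangement_iff by blast
  qed
qed

lemma eventually_states_fit_in_scaled:
  assumes P: "finite P" "\<forall>a\<in>P. is_box d a" and Q: "finite Q" "\<forall>b\<in>Q. is_box d b"
  shows "\<forall>\<^sub>F c in at_top. 0 < c \<and>
    (\<forall>a\<in>P. \<forall>b\<in>Q. \<forall>s\<in>box_states a. \<forall>t\<in>box_states (scale c b). fits_in s t)"
proof -
  have side: "\<forall>\<^sub>F c in at_top. 2 * y < c * z" if "0 < z" for y z :: real
    using eventually_gt_at_top[of "2 * y / z"] by eventually_elim (use that in \<open>simp add: field_simps\<close>)
  have "\<forall>\<^sub>F c in at_top. \<forall>a\<in>P. \<forall>b\<in>Q. \<forall>y\<in>set a. \<forall>z\<in>set b. 2 * y < c * z"
    using P Q side unfolding is_box_def by (simp add: eventually_ball_finite_distrib)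
  with eventually_gt_at_top[of 0] show ?thesis
  proof eventually_elim
    case (elim c)
    have "fits_in s t" if a: "a \<in> P" and b: "b \<in> Q"
      and s: "s \<in> box_states a" and t: "t \<in> box_states (scale c b)" for a b s t
    proof (rule fits_in_if_sides_less)
      show "length s = length t"
        using length_box_state[OF s] length_box_state[OF t] P(2) Q(2) a b
        by (simp add: is_box_def scale_def)
      show "\<forall>y'\<in>set s. \<forall>z'\<in>set t. y' < z'"
      proof (intro ballI)
        fix y' z' assume "y' \<in> set s" "z' \<in> set t"
        have a_pos: "\<forall>y\<in>set a. 0 < y" and cb_pos: "\<forall>w\<in>set (scale c b). 0 < w"
          using P(2) Q(2) a b elim(1) unfolding is_box_def scale_def by auto
        obtain y where y: "y \<in> set a" "y' \<le> 2 * y"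
          by (rule box_state_side_bounds[OF s \<open>y' \<in> set s\<close> a_pos])
        obtain w where w: "w \<in> set (scale c b)" "w \<le> z'"
          by (rule box_state_side_bounds[OF t \<open>z' \<in> set t\<close> cb_pos])
        then obtain z where "z \<in> set b" "w = c * z" unfolding scale_def by auto
        then show "y' < z'" using elim(2) a b y w by fastforce
      qed
    qed
    then show ?case using elim(1) by blast
  qed
qed

lemma map_upt_cong:
  "(\<And>i. i \<in> {1..n} \<Longrightarrow> f i = g i) \<Longrightarrow> map f [1..<n + 1] = map g [1..<n + 1]"
  by (rule map_cong) auto

lemma map_upt_add_split:
  "map f [1..<n + k + 1] = map f [1..<n + 1] @ map (\<lambda>i. f (i + n)) [1..<k + 1]"
  by (induction k) (simp_all add: ac_simps)

lemma map_upt_split_at: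
  assumes "j \<in> {1..n}"
  shows "map f [1..<n + 1] = map f [1..<j] @ f j # map f [j + 1..<n + 1]"
proof -
  have "[1..<n + 1] = [1..<j] @ [j..<n + 1]"
    using assms upt_add_eq_append[of 1 j "n + 1 - j"] by (simp del: upt_Suc)
  also have "[j..<n + 1] = j # [j + 1..<n + 1]"
    using assms by (simp del: upt_Suc add: upt_conv_Cons)
  finally show ?thesis by simp
qed

lemma map_upt_insert:
  assumes j: "j \<in> {1..n}"
    and "\<forall>i\<in>{1..j}. f i = g i" "f (j + 1) = c" "\<forall>i\<in>{j + 1..n}. f (i + 1) = g i"
  shows "map f [1..<n + 1 + 1] = map g [1..<j] @ g j # c # map g [j + 1..<n + 1]"
proof -
  have "map f [1..<n + 1 + 1] = map f [1..<j] @ f j # map f [j + 1..<n + 1 + 1]"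
    using j by (intro map_upt_split_at) auto
  also have "[j + 1..<n + 1 + 1] = (j + 1) # map Suc [j + 1..<n + 1]"
    using j by (simp only: map_Suc_upt) (simp del: upt_Suc add: upt_conv_Cons)
  also have "map f [1..<j] @ f j # map f ((j + 1) # map Suc [j + 1..<n + 1])
      = map g [1..<j] @ g j # c # map g [j + 1..<n + 1]"
    using assms by (simp del: upt_Suc)
  finally show ?thesis .
qed

lemma set_map_upt: "set (map f [1..<n + 1]) = f ` {1..n}"
  by (auto simp del: upt_Suc)

lemma set_map_upt_permutes:
  assumes "p permutes {1..n}"
  shows "set (map (\<lambda>i. f (p i)) [1..<n + 1]) = f ` {1..n}"
proof -
  have "set (map (\<lambda>i. f (p i)) [1..<n + 1]) = f ` p ` {1..n}"
    by (auto simp del: upt_Suc)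
  then show ?thesis by (simp only: permutes_image[OF assms])
qed

lemma perm_sum_low: "i \<in> {1..n} \<Longrightarrow> perm_sum n p1 k p2 i = p1 i"
  by (simp add: perm_sum_def)

lemma perm_sum_high: "i \<in> {1..k} \<Longrightarrow> perm_sum n p1 k p2 (i + n) = p2 i + n"
  by (simp add: perm_sum_def)

definition join_boxes :: "nat \<Rightarrow> (nat \<Rightarrow> real list) \<Rightarrow> (nat \<Rightarrow> real list) \<Rightarrow> nat \<Rightarrow> real list" where
  "join_boxes n B1 B2 i = (if i \<le> n then B1 i else B2 (i - n))"

lemma map_join_boxes:
  "map (join_boxes n B1 B2) [1..<n + k + 1] = map B1 [1..<n + 1] @ map B2 [1..<k + 1]"
proof -
  have "map (join_boxes n B1 B2) [1..<n + 1] = map B1 [1..<n + 1]"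
    by (rule map_upt_cong) (simp add: join_boxes_def)
  moreover have "map (\<lambda>i. join_boxes n B1 B2 (i + n)) [1..<k + 1] = map B2 [1..<k + 1]"
    by (rule map_upt_cong) (simp add: join_boxes_def)
  ultimately show ?thesis unfolding map_upt_add_split by (simp only:)
qed

lemma map_join_boxes_perm_sum:
  assumes p1: "p1 permutes {1..n}" and p2: "p2 permutes {1..k}"
  shows "map (\<lambda>i. join_boxes n B1 B2 (perm_sum n p1 k p2 i)) [1..<n + k + 1] =
    map (\<lambda>i. B1 (p1 i)) [1..<n + 1] @ map (\<lambda>i. B2 (p2 i)) [1..<k + 1]"
proof -
  have "map (\<lambda>i. join_boxes n B1 B2 (perm_sum n p1 k p2 i)) [1..<n + 1] =
      map (\<lambda>i. B1 (p1 i)) [1..<n + 1]"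
  proof (rule map_upt_cong)
    fix i assume "i \<in> {1..n}"
    moreover have "p1 i \<in> {1..n}" using \<open>i \<in> {1..n}\<close> permutes_in_image[OF p1] by blast
    ultimately show "join_boxes n B1 B2 (perm_sum n p1 k p2 i) = B1 (p1 i)"
      by (simp add: perm_sum_low join_boxes_def)
  qed
  moreover have "map (\<lambda>i. join_boxes n B1 B2 (perm_sum n p1 k p2 (i + n))) [1..<k + 1] =
      map (\<lambda>i. B2 (p2 i)) [1..<k + 1]"
  proof (rule map_upt_cong)
    fix i assume "i \<in> {1..k}"
    moreover have "p2 i \<in> {1..k}" using \<open>i \<in> {1..k}\<close> permutes_in_image[OF p2] by blast
    ultimately show "join_boxes n B1 B2 (perm_sum n p1 k p2 (i + n)) = B2 (p2 i)"
      by (simp add: perm_sum_high join_boxes_def)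
  qed
  ultimately show ?thesis unfolding map_upt_add_split by (simp only:)
qed

lemma perm_dup_before:
  "i \<in> {1..inv p x} \<Longrightarrow> perm_dup n p x i = (if x < p i then p i + 1 else p i)"
  by (simp add: perm_dup_def)

lemma perm_dup_at: "perm_dup n p x (Suc (inv p x)) = Suc x"
  by (simp add: perm_dup_def)

lemma perm_dup_after:
  "i \<in> {Suc (inv p x)..n} \<Longrightarrow> perm_dup n p x (Suc i) = (if x < p i then p i + 1 else p i)"
  by (simp add: perm_dup_def)

definition insert_box :: "nat \<Rightarrow> (nat \<Rightarrow> real list) \<Rightarrow> real list \<Rightarrow> nat \<Rightarrow> real list" where
  "insert_box x B a i = (if i = x + 1 then a else if x < i then B (i - 1) else B i)"

lemma map_insert_box:
  "x \<in> {1..n} \<Longrightarrow> map (insert_box x B a) [1..<n + 1 + 1] = map B [1..<x] @ B x # a # map B [x + 1..<n + 1]"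
  by (rule map_upt_insert) (auto simp: insert_box_def)

lemma map_insert_box_perm_dup:
  assumes p: "p permutes {1..n}" and x: "x \<in> {1..n}"
  shows "map (\<lambda>i. insert_box x B a (perm_dup n p x i)) [1..<n + 1 + 1] =
    map (\<lambda>i. B (p i)) [1..<inv p x] @ B x # a # map (\<lambda>i. B (p i)) [inv p x + 1..<n + 1]"
proof -
  have shift: "insert_box x B a (if x < v then v + 1 else v) = B v" for v
    by (simp add: insert_box_def)
  have "inv p x \<in> {1..n}"
    using permutes_in_image[OF permutes_inv[OF p]] x by blast
  then have "map (\<lambda>i. insert_box x B a (perm_dup n p x i)) [1..<n + 1 + 1] =
      map (\<lambda>i. B (p i)) [1..<inv p x] @ B (p (inv p x)) # a # map (\<lambda>i. B (p i)) [inv p x + 1..<n + 1]"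
    by (rule map_upt_insert)
      (simp_all add: perm_dup_before perm_dup_at perm_dup_after shift insert_box_def)
  then show ?thesis by (simp only: permutes_inverses(1)[OF p])
qed

lemma achievable_inv:
  assumes p: "p permutes {1..n}" and ach: "achievable d n p"
  shows "achievable d n (inv p)"
proof -
  obtain B where B: "\<forall>i\<in>{1..n}. is_box d (B i)" "possible_arrangement (map B [1..<n + 1])"
    "possible_arrangement (map (\<lambda>i. B (p i)) [1..<n + 1])"
    using ach unfolding achievable_def by blast
  have "(\<lambda>i. B (p (inv p i))) = B"
    by (simp add: permutes_inverses(1)[OF p])
  moreover have "\<forall>i\<in>{1..n}. is_box d (B (p i))"
    using B(1) permutes_in_image[OF p] by blast
  ultimately show ?thesis
    unfolding achievable_def using B(2,3) by (intro exI[of _ "\<lambda>i. B (p i)"]) (simp del: upt_Suc)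
qed

lemma achievable_perm_sum:
  assumes p1: "p1 permutes {1..n}" and p2: "p2 permutes {1..k}"
    and ach1: "achievable d n p1" and ach2: "achievable d k p2"
  shows "achievable d (n + k) (perm_sum n p1 k p2)"
proof -
  obtain B1 where B1: "\<forall>i\<in>{1..n}. is_box d (B1 i)" "possible_arrangement (map B1 [1..<n + 1])"
    "possible_arrangement (map (\<lambda>i. B1 (p1 i)) [1..<n + 1])"
    using ach1 unfolding achievable_def by blast
  obtain B2 where B2: "\<forall>i\<in>{1..k}. is_box d (B2 i)" "possible_arrangement (map B2 [1..<k + 1])"
    "possible_arrangement (map (\<lambda>i. B2 (p2 i)) [1..<k + 1])"
    using ach2 unfolding achievable_def by blast
  obtain c where c: "0 < c" and fit: "\<forall>a\<in>B1 ` {1..n}. \<forall>b\<in>B2 ` {1..k}.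
      \<forall>s\<in>box_states a. \<forall>t\<in>box_states (scale c b). fits_in s t"
    using eventually_happens'[OF _ eventually_states_fit_in_scaled[of "B1 ` {1..n}" d "B2 ` {1..k}"]]
      B1(1) B2(1) by auto
  have fit_lists: "\<forall>a\<in>set X. \<forall>b\<in>set Y. \<forall>s\<in>box_states a. \<forall>t\<in>box_states b. fits_in s t"
    if "set X = B1 ` {1..n}" "set Y = (\<lambda>i. scale c (B2 i)) ` {1..k}" for X Y
    using fit that by auto
  let ?B = "join_boxes n B1 (\<lambda>i. scale c (B2 i))"
  have "\<forall>i\<in>{1..n + k}. is_box d (?B i)"
    using B1(1) by (auto simp: join_boxes_def intro!: is_box_scale[OF c] B2(1)[rule_format])
  moreover have "possible_arrangement (map ?B [1..<n + k + 1])"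
    unfolding map_join_boxes
    by (rule possible_arrangement_append[OF B1(2)
          possible_arrangement_scale[OF c B2(2), unfolded map_map comp_def]
          fit_lists[OF set_map_upt set_map_upt]])
  moreover have "possible_arrangement (map (\<lambda>i. ?B (perm_sum n p1 k p2 i)) [1..<n + k + 1])"
    unfolding map_join_boxes_perm_sum[OF p1 p2]
    by (rule possible_arrangement_append[OF B1(3)
          possible_arrangement_scale[OF c B2(3), unfolded map_map comp_def]
          fit_lists[OF set_map_upt_permutes[OF p1] set_map_upt_permutes[OF p2]]])
  ultimately show ?thesis
    unfolding achievable_def by blast
qed

lemma achievable_perm_dup:
  assumes p: "p permutes {1..n}" and ach: "achievable d n p" and x: "x \<in> {1..n}"
  shows "achievable d (n + 1) (perm_dup n p x)"
proof -
  obtain B where B: "\<forall>i\<in>{1..n}. is_box d (B i)" "possible_arrangement (map B [1..<n + 1])"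
    "possible_arrangement (map (\<lambda>i. B (p i)) [1..<n + 1])"
    using ach unfolding achievable_def by blast
  have j: "inv p x \<in> {1..n}" "p (inv p x) = x"
    using permutes_in_image[OF permutes_inv[OF p]] x permutes_inverses(1)[OF p] by auto
  have pos: "\<forall>y\<in>set (B x). 0 < y"
    using B(1) x unfolding is_box_def by blast
  have "\<forall>\<^sub>F b in at_right 1. 1 < b \<and>
      possible_arrangement (map (insert_box x B (scale b (B x))) [1..<n + 1 + 1]) \<and>
      possible_arrangement (map (\<lambda>i. insert_box x B (scale b (B x)) (perm_dup n p x i)) [1..<n + 1 + 1])"
    unfolding map_insert_box[OF x] map_insert_box_perm_dup[OF p x]
    using eventually_at_right_less
      eventually_possible_arrangement_insert_scaled[OF pos B(2)[unfolded map_upt_split_at[OF x]]]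
      eventually_possible_arrangement_insert_scaled[OF pos B(3)[unfolded map_upt_split_at[OF j(1)] j(2)]]
    by (intro eventually_conj)
  then obtain b where "1 < b"
    "possible_arrangement (map (insert_box x B (scale b (B x))) [1..<n + 1 + 1])"
    "possible_arrangement (map (\<lambda>i. insert_box x B (scale b (B x)) (perm_dup n p x i)) [1..<n + 1 + 1])"
    using eventually_happens'[OF trivial_limit_at_right_real] by blast
  moreover have "\<forall>i\<in>{1..n + 1}. is_box d (insert_box x B (scale b (B x)) i)"
    using B(1) x is_box_scale[of b d "B x"] \<open>1 < b\<close>
    by (auto simp: insert_box_def intro!: B(1)[rule_format])
  ultimately show ?thesis
    unfolding achievable_def by blast
qed

theorem theorem17:
  fixes d :: nat
  assumes "d \<ge> 1"
  shows "(\<forall>n k p1 p2. p1 permutes {1..n} \<and> p2 permutes {1..k} \<and>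
            achievable d n p1 \<and> achievable d k p2 \<longrightarrow>
            achievable d (n + k) (perm_sum n p1 k p2))
       \<and> (\<forall>n p x. p permutes {1..n} \<and> achievable d n p \<and> x \<in> {1..n} \<longrightarrow>
            achievable d (n + 1) (perm_dup n p x))
       \<and> (\<forall>n p. p permutes {1..n} \<and> achievable d n p \<longrightarrow> achievable d n (inv p))"
  using achievable_perm_sum achievable_perm_dup achievable_inv by blast

end
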